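(* Let $h$ be a hive which is a vertex (extreme point) of the polytope of all hives having the same border labels as $h$, and suppose every flatspace of $h$ is a small triangle or a small rhombus. Then for every hive vertex $v\in H$, the label $h(v)$ is an integer linear combination of the border labels $h(b)$, $b\in B$.
   Context: Fix $n\ge1$. Hive vertices: $H=\{(p,q)\in\mathbb{Z}^2:p,q\ge0,\ p+q\le n\}$, placed in the plane at $p(1,0)+q(1/2,\sqrt3/2)$, forming a big triangle subdivided into $n^2$ small unit triangles. A rhombus is the union of two small triangles sharing an edge; for integers $p,q\ge0$ with $p+q\le n-2$ the rhombus inequalities are $h(p+1,q)+h(p,q+1)\ge h(p,q)+h(p+1,q+1)$, $h(p+1,q)+h(p+1,q+1)\ge h(p,q+1)+h(p+2,q)$, $h(p,q+1)+h(p+1,q+1)\ge h(p+1,q)+h(p,q+2)$ (obtuse-vertex sum $\ge$ acute-vertex sum). A hive is $h:H\to\mathbb{R}$ satisfying all of them. Border $B$: vertices with $p=0$, $q=0$ or $p+q=n$; the set of hives with prescribed values on $B$ is a compact polytope. A rhombus is flat if its inequality holds with equality. Flatspaces are the unions of small triangles in the classes of the equivalence relation generated by "share an edge and form a flat rhombus"; a small rhombus flatspace is one consisting of exactly two small triangles. *)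

theory Defs
  imports Main "HOL.Real"
begin

text \<open>Labelings are functions
  nat \<times> nat \<Rightarrow> real; only their values on H n matter, and the polytope
  below consists of labelings vanishing outside H n (so it is a copy of R^H).\<close>

definition hive_vertices :: "nat \<Rightarrow> (nat \<times> nat) set" where
  "hive_vertices n = {(p, q). p + q \<le> n}"

definition border :: "nat \<Rightarrow> (nat \<times> nat) set" where
  "border n = {(p, q). p + q \<le> n \<and> (p = 0 \<or> q = 0 \<or> p + q = n)}"

definition is_hive :: "nat \<Rightarrow> (nat \<times> nat \<Rightarrow> real) \<Rightarrow> bool" where
  "is_hive n h \<longleftrightarrow> (\<forall>p q. p + q + 2 \<le> n \<longrightarrow>
       h (p+1, q) + h (p, q+1) \<ge> h (p, q) + h (p+1, q+1) \<and>
       h (p+1, q) + h (p+1, q+1) \<ge> h (p, q+1) + h (p+2, q) \<and>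
       h (p, q+1) + h (p+1, q+1) \<ge> h (p+1, q) + h (p, q+2))"

definition hive_polytope :: "nat \<Rightarrow> (nat \<times> nat \<Rightarrow> real) \<Rightarrow> (nat \<times> nat \<Rightarrow> real) set" where
  "hive_polytope n h = {g. is_hive n g \<and> (\<forall>v. v \<notin> hive_vertices n \<longrightarrow> g v = 0)
                          \<and> (\<forall>b \<in> border n. g b = h b)}"

definition extreme_pt :: "('a \<Rightarrow> real) \<Rightarrow> ('a \<Rightarrow> real) set \<Rightarrow> bool" where
  "extreme_pt x S \<longleftrightarrow> x \<in> S \<and>
     (\<forall>a \<in> S. \<forall>b \<in> S. \<forall>t::real. 0 < t \<and> t < 1 \<and> x = (\<lambda>v. t * a v + (1 - t) * b v) \<longrightarrow> a = b)"

text \<open>Small triangles: Up p q has vertices (p,q),(p+1,q),(p,q+1);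
  Down p q has vertices (p+1,q),(p,q+1),(p+1,q+1).\<close>
datatype tri = Up nat nat | Down nat nat

definition small_triangles :: "nat \<Rightarrow> tri set" where
  "small_triangles n = {Up p q | p q. p + q + 1 \<le> n} \<union> {Down p q | p q. p + q + 2 \<le> n}"

text \<open>The three rhombi
  at (p,q) are Up p q \<union> Down p q, Down p q \<union> Up (p+1) q, Down p q \<union> Up p (q+1),
  corresponding to the three rhombus inequalities in that order.\<close>
definition flat_adj :: "nat \<Rightarrow> (nat \<times> nat \<Rightarrow> real) \<Rightarrow> tri \<Rightarrow> tri \<Rightarrow> bool" where
  "flat_adj n h T U \<longleftrightarrow> (\<exists>p q. p + q + 2 \<le> n \<and> T = Down p q \<and>
      ((U = Up p q \<and> h (p+1, q) + h (p, q+1) = h (p, q) + h (p+1, q+1)) \<or>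
       (U = Up (p+1) q \<and> h (p+1, q) + h (p+1, q+1) = h (p, q+1) + h (p+2, q)) \<or>
       (U = Up p (q+1) \<and> h (p, q+1) + h (p+1, q+1) = h (p+1, q) + h (p, q+2))))"

definition flat_equiv :: "nat \<Rightarrow> (nat \<times> nat \<Rightarrow> real) \<Rightarrow> tri \<Rightarrow> tri \<Rightarrow> bool" where
  "flat_equiv n h = (\<lambda>T U. flat_adj n h T U \<or> flat_adj n h U T)\<^sup>*\<^sup>*"

definition flatspaces :: "nat \<Rightarrow> (nat \<times> nat \<Rightarrow> real) \<Rightarrow> tri set set" where
  "flatspaces n h = {{U \<in> small_triangles n. flat_equiv n h T U} | T. T \<in> small_triangles n}"

end

(*
  Call an edge nonintegral if the difference of the labels at its ends is not an integer
  combination of border labels.  The signed edge differences around a small triangle sum to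
  zero, so a triangle with one nonintegral edge has a second one.  If nonintegral edges exist,
  take as unknowns an edge labelling x supported on them and on the short diagonals of those
  flat rhombi whose four sides are all nonintegral, and impose zero circulation around every
  triangle meeting the support and flatness of those rhombi.  Each inner edge lies in exactly
  one up and one down triangle, so counting incidences shows that after dropping one of the
  triangle equations (which the others imply) there are fewer equations than unknowns, and a
  nonzero x exists.  Because flatspaces are small, every other flat rhombus has a pair of
  integral opposite sides, where x vanishes, so x keeps all flat rhombi flat.  Integrating x
  gives a direction in which h can be moved both ways inside its hive polytope, contradicting
  extremality.  Hence all edge differences, and by summation all labels, are integral.
*)

theory Submission
  imports Defs Complex_Main
begin

section \<open>Integer combinations\<close>

definition int_span :: "'a set \<Rightarrow> ('a \<Rightarrow> 'b::ring_1) \<Rightarrow> 'b set" where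
  "int_span A f = {y. \<exists>c :: 'a \<Rightarrow> int. y = (\<Sum>a\<in>A. of_int (c a) * f a)}"

lemma int_span_zero [intro]: "0 \<in> int_span A f"
  unfolding int_span_def by (auto intro!: exI[of _ "\<lambda>_. 0"])

lemma int_span_intro: "y = (\<Sum>a\<in>A. of_int (c a) * f a) \<Longrightarrow> y \<in> int_span A f"
  unfolding int_span_def by blast

lemma int_span_add [intro]:
  assumes "x \<in> int_span A f" "y \<in> int_span A f"
  shows "x + y \<in> int_span A f"
proof -
  obtain c d where "x = (\<Sum>a\<in>A. of_int (c a) * f a)" "y = (\<Sum>a\<in>A. of_int (d a) * f a)"
    using assms unfolding int_span_def by blast
  then have "x + y = (\<Sum>a\<in>A. of_int (c a + d a) * f a)"
    by (simp add: sum.distrib distrib_right)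
  then show ?thesis
    by (rule int_span_intro)
qed

lemma int_span_uminus [intro]:
  assumes "x \<in> int_span A f"
  shows "- x \<in> int_span A f"
proof -
  obtain c where "x = (\<Sum>a\<in>A. of_int (c a) * f a)"
    using assms unfolding int_span_def by blast
  then have "- x = (\<Sum>a\<in>A. of_int (- c a) * f a)"
    by (simp add: sum_negf)
  then show ?thesis
    by (rule int_span_intro)
qed

lemma int_span_diff [intro]: "x \<in> int_span A f \<Longrightarrow> y \<in> int_span A f \<Longrightarrow> x - y \<in> int_span A f"
  using int_span_add[of x A f "- y"] by auto

lemma int_span_sum [intro]: "(\<And>i. i \<in> I \<Longrightarrow> g i \<in> int_span A f) \<Longrightarrow> sum g I \<in> int_span A f"
  by (induction I rule: infinite_finite_induct) auto

lemma int_span_generator [intro]: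
  assumes "finite A" "a \<in> A"
  shows "f a \<in> int_span A f"
proof -
  have "f a = (\<Sum>a'\<in>A. of_int (of_bool (a' = a)) * f a')"
    using assms by (simp add: if_distrib[of "\<lambda>c. c * _"] cong: if_cong)
  then show ?thesis
    by (rule int_span_intro)
qed

section \<open>Edges and small triangles\<close>

datatype edge = Horiz nat nat | Rising nat nat | Falling nat nat

fun grid_edge :: "nat \<Rightarrow> edge \<Rightarrow> bool" where
  "grid_edge n (Horiz p q) \<longleftrightarrow> p + q < n"
| "grid_edge n (Rising p q) \<longleftrightarrow> p + q < n"
| "grid_edge n (Falling p q) \<longleftrightarrow> p + q < n"

fun inner_edge :: "nat \<Rightarrow> edge \<Rightarrow> bool" where
  "inner_edge n (Horiz p q) \<longleftrightarrow> 0 < q \<and> p + q < n"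
| "inner_edge n (Rising p q) \<longleftrightarrow> 0 < p \<and> p + q < n"
| "inner_edge n (Falling p q) \<longleftrightarrow> p + q + 1 < n"

fun edge_diff :: "(nat \<times> nat \<Rightarrow> real) \<Rightarrow> edge \<Rightarrow> real" where
  "edge_diff g (Horiz p q) = g (p + 1, q) - g (p, q)"
| "edge_diff g (Rising p q) = g (p, q + 1) - g (p, q)"
| "edge_diff g (Falling p q) = g (p, q + 1) - g (p + 1, q)"

fun edge_sign :: "edge \<Rightarrow> real" where
  "edge_sign (Rising p q) = - 1"
| "edge_sign _ = 1"

fun triangle_edges :: "tri \<Rightarrow> edge set" where
  "triangle_edges (Up p q) = {Horiz p q, Rising p q, Falling p q}"
| "triangle_edges (Down p q) = {Horiz p (Suc q), Rising (Suc p) q, Falling p q}"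

definition circulation :: "(edge \<Rightarrow> real) \<Rightarrow> tri \<Rightarrow> real" where
  "circulation x T = (\<Sum>e\<in>triangle_edges T. edge_sign e * x e)"

fun up_triangle :: "edge \<Rightarrow> tri" where
  "up_triangle (Horiz p q) = Up p q"
| "up_triangle (Rising p q) = Up p q"
| "up_triangle (Falling p q) = Up p q"

text \<open>An inner edge \<open>e\<close> is the common side of \<open>up_triangle e\<close> and \<open>down_triangle e\<close>, so rhombi are
  indexed by their short diagonals.  For border edges \<open>down_triangle\<close> is meaningless.\<close>

fun down_triangle :: "edge \<Rightarrow> tri" where
  "down_triangle (Horiz p q) = Down p (q - 1)"
| "down_triangle (Rising p q) = Down (p - 1) q"
| "down_triangle (Falling p q) = Down p q"

definition up_triangles :: "nat \<Rightarrow> tri set" where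
  "up_triangles n = {Up p q | p q. p + q + 1 \<le> n}"

definition down_triangles :: "nat \<Rightarrow> tri set" where
  "down_triangles n = {Down p q | p q. p + q + 2 \<le> n}"

lemma inner_edge_imp_grid_edge: "inner_edge n e \<Longrightarrow> grid_edge n e"
  by (cases e) auto

lemma finite_grid_edges: "finite {e. grid_edge n e}"
proof -
  let ?P = "{..n} \<times> {..n}"
  let ?E = "(\<lambda>(p, q). Horiz p q) ` ?P \<union> (\<lambda>(p, q). Rising p q) ` ?P \<union> (\<lambda>(p, q). Falling p q) ` ?P"
  have "e \<in> ?E" if "grid_edge n e" for e
    using that by (cases e) force+
  then have "{e. grid_edge n e} \<subseteq> ?E"
    by blast
  then show ?thesis
    by (rule finite_subset) simp
qed

lemma finite_inner_edges: "finite {e. inner_edge n e}"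
  using finite_grid_edges by (rule finite_subset[rotated]) (auto intro: inner_edge_imp_grid_edge)

lemma small_triangles_eq: "small_triangles n = up_triangles n \<union> down_triangles n"
  by (simp add: small_triangles_def up_triangles_def down_triangles_def)

lemma up_triangles_disjoint_down_triangles: "up_triangles n \<inter> down_triangles n = {}"
  by (auto simp: up_triangles_def down_triangles_def)

lemma finite_up_triangles: "finite (up_triangles n)"
proof -
  have "up_triangles n \<subseteq> (\<lambda>(p, q). Up p q) ` ({..n} \<times> {..n})"
    by (force simp: up_triangles_def)
  then show ?thesis
    by (rule finite_subset) simp
qed

lemma finite_down_triangles: "finite (down_triangles n)"
proof -
  have "down_triangles n \<subseteq> (\<lambda>(p, q). Down p q) ` ({..n} \<times> {..n})"
    by (force simp: down_triangles_def)
  then show ?thesis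
    by (rule finite_subset) simp
qed

lemma finite_small_triangles: "finite (small_triangles n)"
  by (simp add: small_triangles_eq finite_up_triangles finite_down_triangles)

lemma finite_triangle_edges [simp]: "finite (triangle_edges T)"
  by (cases T) auto

lemma card_triangle_edges: "card (triangle_edges T) = 3"
  by (cases T) auto

lemma circulation_Up [simp]:
  "circulation x (Up p q) = x (Horiz p q) - x (Rising p q) + x (Falling p q)"
  by (simp add: circulation_def)

lemma circulation_Down [simp]:
  "circulation x (Down p q) = x (Horiz p (Suc q)) - x (Rising (Suc p) q) + x (Falling p q)"
  by (simp add: circulation_def)

lemma circulation_edge_diff: "circulation (edge_diff g) T = 0"
  by (cases T) simp_all

lemma mem_triangle_edges_Up: "e \<in> triangle_edges (Up p q) \<longleftrightarrow> up_triangle e = Up p q"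
  by (cases e) auto

lemma mem_triangle_edges_Down:
  "inner_edge n e \<Longrightarrow> e \<in> triangle_edges (Down p q) \<longleftrightarrow> down_triangle e = Down p q"
  by (cases e) auto

lemma up_triangle_mem: "grid_edge n e \<Longrightarrow> up_triangle e \<in> up_triangles n"
  by (cases e) (auto simp: up_triangles_def)

lemma down_triangle_mem: "inner_edge n e \<Longrightarrow> down_triangle e \<in> down_triangles n"
  by (cases e) (auto simp: down_triangles_def)

lemma edge_in_up_triangle: "e \<in> triangle_edges (up_triangle e)"
  by (cases e) auto

lemma edge_in_down_triangle: "inner_edge n e \<Longrightarrow> e \<in> triangle_edges (down_triangle e)"
  by (cases e) auto

lemma grid_edge_if_in_triangle: "T \<in> small_triangles n \<Longrightarrow> e \<in> triangle_edges T \<Longrightarrow> grid_edge n e"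
  by (auto simp: small_triangles_def)

lemma triangle_of_inner_edge:
  "inner_edge n e \<Longrightarrow> e \<in> triangle_edges T \<Longrightarrow> T = up_triangle e \<or> T = down_triangle e"
  by (cases T) (auto simp: mem_triangle_edges_Up mem_triangle_edges_Down)

lemma up_triangle_neq_down_triangle [simp]: "up_triangle e \<noteq> down_triangle e'"
  by (cases e; cases e') auto

lemma up_down_triangle_inj:
  "inner_edge n e \<Longrightarrow> inner_edge n e' \<Longrightarrow> up_triangle e = up_triangle e' \<Longrightarrow>
    down_triangle e = down_triangle e' \<Longrightarrow> e = e'"
  by (cases e; cases e') auto

lemma rhombus_triangles_mem:
  assumes "inner_edge n e"
  shows "up_triangle e \<in> small_triangles n" "down_triangle e \<in> small_triangles n"
  using assms inner_edge_imp_grid_edge up_triangle_mem down_triangle_mem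
  by (auto simp: small_triangles_eq)

lemma sum_incidence_unique:
  assumes "finite A" "finite B" "\<And>y. y \<in> B \<Longrightarrow> {x \<in> A. y \<in> S x} = {t y}"
  shows "(\<Sum>x\<in>A. \<Sum>y\<in>S x \<inter> B. f y) = sum f B"
proof -
  have "(\<Sum>x\<in>A. \<Sum>y\<in>S x \<inter> B. f y) = (\<Sum>x\<in>A. \<Sum>y\<in>{y \<in> B. y \<in> S x}. f y)"
    by (intro sum.cong) auto
  also have "\<dots> = (\<Sum>y\<in>B. \<Sum>x\<in>{x \<in> A. y \<in> S x}. f y)"
    using assms(1,2) by (rule sum.swap_restrict)
  finally show ?thesis
    using assms(3) by simp
qed

lemma sum_up_triangles_incidence:
  assumes "finite X" "X \<subseteq> {e. grid_edge n e}"
  shows "(\<Sum>T\<in>up_triangles n. \<Sum>e\<in>triangle_edges T \<inter> X. f e) = sum f X"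
proof (rule sum_incidence_unique[OF finite_up_triangles assms(1)])
  fix e assume "e \<in> X"
  then show "{T \<in> up_triangles n. e \<in> triangle_edges T} = {up_triangle e}"
    using assms(2) up_triangle_mem[of n e]
    by (auto simp: up_triangles_def mem_triangle_edges_Up edge_in_up_triangle)
qed

lemma sum_down_triangles_incidence:
  assumes "finite X" "X \<subseteq> {e. inner_edge n e}"
  shows "(\<Sum>T\<in>down_triangles n. \<Sum>e\<in>triangle_edges T \<inter> X. f e) = sum f X"
proof (rule sum_incidence_unique[OF finite_down_triangles assms(1)])
  fix e assume "e \<in> X"
  then show "{T \<in> down_triangles n. e \<in> triangle_edges T} = {down_triangle e}"
    using assms(2) down_triangle_mem[of n e] edge_in_down_triangle[of n e]
    by (auto simp: down_triangles_def mem_triangle_edges_Down)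
qed

lemma circulation_eq_restrict:
  assumes "\<And>e. e \<notin> X \<Longrightarrow> x e = 0"
  shows "circulation x T = (\<Sum>e\<in>triangle_edges T \<inter> X. edge_sign e * x e)"
  unfolding circulation_def using assms by (intro sum.mono_neutral_right) auto

lemma sum_circulation_up_eq_down:
  assumes "\<And>e. \<not> inner_edge n e \<Longrightarrow> x e = 0"
  shows "(\<Sum>T\<in>up_triangles n. circulation x T) = (\<Sum>T\<in>down_triangles n. circulation x T)"
proof -
  let ?E = "{e. inner_edge n e}"
  have circ: "circulation x T = (\<Sum>e\<in>triangle_edges T \<inter> ?E. edge_sign e * x e)" for T
    using assms by (intro circulation_eq_restrict) blast
  have "(\<Sum>T\<in>up_triangles n. circulation x T) = (\<Sum>e\<in>?E. edge_sign e * x e)"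
    unfolding circ using finite_inner_edges inner_edge_imp_grid_edge
    by (intro sum_up_triangles_incidence) auto
  also have "\<dots> = (\<Sum>T\<in>down_triangles n. circulation x T)"
    unfolding circ using finite_inner_edges
    by (intro sum_down_triangles_incidence[symmetric]) auto
  finally show ?thesis .
qed

lemma circulation_eq_0_if_all_others:
  assumes "\<And>e. \<not> inner_edge n e \<Longrightarrow> x e = 0" "T0 \<in> up_triangles n"
    and "\<And>T. T \<in> small_triangles n \<Longrightarrow> T \<noteq> T0 \<Longrightarrow> circulation x T = 0"
  shows "circulation x T0 = 0"
proof -
  have "(\<Sum>T\<in>down_triangles n. circulation x T) = 0"
    using assms(2,3) up_triangles_disjoint_down_triangles
    by (intro sum.neutral) (auto simp: small_triangles_eq)
  moreover have "(\<Sum>T\<in>up_triangles n - {T0}. circulation x T) = 0"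
    using assms(3) by (intro sum.neutral) (auto simp: small_triangles_eq)
  ultimately show ?thesis
    using sum_circulation_up_eq_down[of n x] assms(1,2) finite_up_triangles
    by (simp add: sum.remove)
qed

section \<open>Rhombi and hive inequalities\<close>

text \<open>For \<open>x = edge_diff g\<close>, \<open>rhombus_slack x e\<close> is the obtuse-vertex sum minus the acute-vertex sum of
  \<open>g\<close> on the rhombus with short diagonal \<open>e\<close>, written as the difference of \<open>x\<close> on a pair of
  opposite sides; it is \<open>0\<close> for border edges.  \<open>rhombus_pairs e\<close> lists both pairs of opposite
  sides, oriented so that for closed \<open>x\<close> either pair gives the slack.\<close>

fun rhombus_slack :: "(edge \<Rightarrow> real) \<Rightarrow> edge \<Rightarrow> real" where
  "rhombus_slack x (Falling p q) = x (Horiz p q) - x (Horiz p (Suc q))"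
| "rhombus_slack x (Rising (Suc p) q) = x (Horiz p (Suc q)) - x (Horiz (Suc p) q)"
| "rhombus_slack x (Horiz p (Suc q)) = x (Rising (Suc p) q) - x (Rising p (Suc q))"
| "rhombus_slack x _ = 0"

fun rhombus_pairs :: "edge \<Rightarrow> (edge \<times> edge) set" where
  "rhombus_pairs (Falling p q) =
     {(Horiz p q, Horiz p (Suc q)), (Rising p q, Rising (Suc p) q)}"
| "rhombus_pairs (Rising (Suc p) q) =
     {(Horiz p (Suc q), Horiz (Suc p) q), (Falling (Suc p) q, Falling p q)}"
| "rhombus_pairs (Horiz p (Suc q)) =
     {(Rising (Suc p) q, Rising p (Suc q)), (Falling p q, Falling p (Suc q))}"
| "rhombus_pairs _ = {}"

lemma is_hive_iff_rhombus_slack: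
  "is_hive n g \<longleftrightarrow> (\<forall>e. inner_edge n e \<longrightarrow> 0 \<le> rhombus_slack (edge_diff g) e)"
proof
  assume "is_hive n g"
  then have hive_at: "g (p+1, q) + g (p, q+1) \<ge> g (p, q) + g (p+1, q+1) \<and>
       g (p+1, q) + g (p+1, q+1) \<ge> g (p, q+1) + g (p+2, q) \<and>
       g (p, q+1) + g (p+1, q+1) \<ge> g (p+1, q) + g (p, q+2)" if "p + q + 2 \<le> n" for p q
    using that unfolding is_hive_def by blast
  show "\<forall>e. inner_edge n e \<longrightarrow> 0 \<le> rhombus_slack (edge_diff g) e"
  proof (intro allI impI)
    fix e assume inner: "inner_edge n e"
    show "0 \<le> rhombus_slack (edge_diff g) e"
    proof (cases e rule: rhombus_pairs.cases)
      case (1 p q)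
      then show ?thesis using inner hive_at[of p q] by simp
    next
      case (2 p q)
      then show ?thesis using inner hive_at[of p q] by (simp add: numeral_2_eq_2)
    next
      case (3 p q)
      then show ?thesis using inner hive_at[of p q] by (simp add: numeral_2_eq_2)
    qed simp_all
  qed
next
  assume slack: "\<forall>e. inner_edge n e \<longrightarrow> 0 \<le> rhombus_slack (edge_diff g) e"
  show "is_hive n g"
    unfolding is_hive_def
  proof (intro allI impI)
    fix p q assume "p + q + 2 \<le> n"
    then show "g (p+1, q) + g (p, q+1) \<ge> g (p, q) + g (p+1, q+1) \<and>
       g (p+1, q) + g (p+1, q+1) \<ge> g (p, q+1) + g (p+2, q) \<and>
       g (p, q+1) + g (p+1, q+1) \<ge> g (p+1, q) + g (p, q+2)"
      using slack[rule_format, of "Falling p q"] slack[rule_format, of "Rising (Suc p) q"]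
        slack[rule_format, of "Horiz p (Suc q)"]
      by (simp add: numeral_2_eq_2)
  qed
qed

lemma rhombus_slack_edge_diff_add:
  "rhombus_slack (edge_diff (\<lambda>v. g v + s * d v)) e =
     rhombus_slack (edge_diff g) e + s * rhombus_slack (edge_diff d) e"
  by (cases e rule: rhombus_pairs.cases) (simp_all add: algebra_simps)

lemma rhombus_slack_eq_pair:
  assumes "circulation x (up_triangle e) = 0" "circulation x (down_triangle e) = 0"
    and "(a, b) \<in> rhombus_pairs e"
  shows "rhombus_slack x e = x a - x b"
  using assms by (cases e rule: rhombus_pairs.cases) auto

lemma rhombus_slack_cong:
  "inner_edge n e \<Longrightarrow> (\<And>e'. grid_edge n e' \<Longrightarrow> x e' = y e') \<Longrightarrow> rhombus_slack x e = rhombus_slack y e"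
  by (cases e rule: rhombus_pairs.cases) auto

lemma circulation_as_sum:
  assumes "finite X" "\<And>e. e \<notin> X \<Longrightarrow> x e = 0"
  shows "circulation x T = (\<Sum>e\<in>X. circulation (\<lambda>u. of_bool (u = e)) T * x e)"
  using assms
  by (cases T)
    (auto simp: left_diff_distrib distrib_right sum.distrib sum_subtractf of_bool_def if_distrib[of "\<lambda>c. c * _"] cong: if_cong)

lemma rhombus_slack_as_sum:
  assumes "finite X" "\<And>e. e \<notin> X \<Longrightarrow> x e = 0"
  shows "rhombus_slack x r = (\<Sum>e\<in>X. rhombus_slack (\<lambda>u. of_bool (u = e)) r * x e)"
  using assms
  by (cases r rule: rhombus_pairs.cases)
    (auto simp: left_diff_distrib sum_subtractf of_bool_def if_distrib[of "\<lambda>c. c * _"] cong: if_cong)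

lemma rhombus_pair_sides:
  assumes "inner_edge n e" "(a, b) \<in> rhombus_pairs e"
  shows "a \<noteq> e" "b \<noteq> e"
    "a \<in> triangle_edges (up_triangle e) \<union> triangle_edges (down_triangle e)"
    "b \<in> triangle_edges (up_triangle e) \<union> triangle_edges (down_triangle e)"
  using assms by (cases e rule: rhombus_pairs.cases; auto)+

lemma rhombus_triangle_edges:
  assumes "inner_edge n e" "e' \<in> triangle_edges (up_triangle e) \<union> triangle_edges (down_triangle e)"
  shows "e' = e \<or> (\<exists>(a, b)\<in>rhombus_pairs e. e' = a \<or> e' = b)"
  using assms by (cases e rule: rhombus_pairs.cases) auto

lemma flat_adj_if_rhombus_slack_eq_0:
  assumes "inner_edge n e" "rhombus_slack (edge_diff g) e = 0"
  shows "flat_adj n g (down_triangle e) (up_triangle e)"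
  using assms unfolding flat_adj_def
  by (cases e rule: rhombus_pairs.cases) (auto simp: algebra_simps)

lemma finite_border: "finite (border n)"
  by (rule finite_subset[of _ "{..n} \<times> {..n}"]) (auto simp: border_def)

lemma edge_diff_in_int_span_if_border:
  assumes "grid_edge n e" "\<not> inner_edge n e"
  shows "edge_diff g e \<in> int_span (border n) g"
  using assms finite_border
  by (cases e) (auto intro!: int_span_diff int_span_generator simp: border_def)

lemma int_span_edge_sign_mult: "y \<in> int_span A f \<Longrightarrow> edge_sign e * y \<in> int_span A f"
  by (cases e) auto

section \<open>Primitives of closed edge labellings\<close>

definition edge_primitive :: "nat \<Rightarrow> (edge \<Rightarrow> real) \<Rightarrow> nat \<times> nat \<Rightarrow> real" where
  "edge_primitive n x = (\<lambda>(p, q). if p + q \<le> n then \<Sum>i<p. x (Horiz i q) else 0)"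

context
  fixes n :: nat and x :: "edge \<Rightarrow> real"
  assumes closed: "\<And>T. T \<in> small_triangles n \<Longrightarrow> circulation x T = 0"
    and border_zero: "\<And>e. grid_edge n e \<Longrightarrow> \<not> inner_edge n e \<Longrightarrow> x e = 0"
begin

lemma edge_diff_edge_primitive_Rising:
  "p + q < n \<Longrightarrow> edge_diff (edge_primitive n x) (Rising p q) = x (Rising p q)"
proof (induction p)
  case 0
  then show ?case
    using border_zero[of "Rising 0 q"] by (simp add: edge_primitive_def)
next
  case (Suc p)
  have "Up p q \<in> small_triangles n" "Down p q \<in> small_triangles n"
    using Suc.prems by (auto simp: small_triangles_def)
  then have "circulation x (Up p q) = 0" "circulation x (Down p q) = 0"
    using closed by blast+
  then show ?case
    using Suc by (simp add: edge_primitive_def)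
qed

lemma edge_diff_edge_primitive:
  assumes "grid_edge n e"
  shows "edge_diff (edge_primitive n x) e = x e"
proof (cases e)
  case (Horiz p q)
  then show ?thesis
    using assms by (simp add: edge_primitive_def)
next
  case (Rising p q)
  then show ?thesis
    using assms edge_diff_edge_primitive_Rising by simp
next
  case (Falling p q)
  have "Up p q \<in> small_triangles n"
    using assms Falling by (auto simp: small_triangles_def)
  then have "circulation x (Up p q) = 0"
    by (rule closed)
  then show ?thesis
    using assms Falling edge_diff_edge_primitive_Rising[of p q]
    by (simp add: edge_primitive_def)
qed

lemma edge_primitive_bottom: "edge_primitive n x (p, 0) = 0"
  unfolding edge_primitive_def using border_zero by (auto intro!: sum.neutral)

lemma edge_primitive_diagonal: "p + q = n \<Longrightarrow> edge_primitive n x (p, q) = 0"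
proof (induction q arbitrary: p)
  case 0
  show ?case
    by (rule edge_primitive_bottom)
next
  case (Suc q)
  have "edge_diff (edge_primitive n x) (Falling p q) = x (Falling p q)"
    using Suc.prems by (intro edge_diff_edge_primitive) simp
  moreover have "x (Falling p q) = 0"
    using Suc.prems by (intro border_zero) simp_all
  ultimately show ?case
    using Suc.IH[of "p + 1"] Suc.prems by simp
qed

lemma edge_primitive_eq_0:
  assumes "v \<notin> hive_vertices n \<or> v \<in> border n"
  shows "edge_primitive n x v = 0"
proof -
  obtain p q where v: "v = (p, q)"
    by fastforce
  then consider "n < p + q" | "p = 0" | "q = 0" | "p + q = n"
    using assms by (force simp: hive_vertices_def border_def)
  then show ?thesis
    using edge_primitive_bottom[of p] edge_primitive_diagonal[of p q]
    by cases (auto simp: v edge_primitive_def)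
qed

end

section \<open>Extreme points and homogeneous linear systems\<close>

lemma extreme_pt_tight_direction_eq_0:
  fixes L :: "'i \<Rightarrow> ('a \<Rightarrow> real) \<Rightarrow> real"
  assumes extreme: "extreme_pt h P" and "finite I"
    and feasible: "\<And>s. \<forall>i\<in>I. 0 \<le> L i (\<lambda>v. h v + s * d v) \<Longrightarrow> (\<lambda>v. h v + s * d v) \<in> P"
    and linear: "\<And>i s. i \<in> I \<Longrightarrow> L i (\<lambda>v. h v + s * d v) = L i h + s * L i d"
    and nonneg: "\<And>i. i \<in> I \<Longrightarrow> 0 \<le> L i h"
    and tight: "\<And>i. i \<in> I \<Longrightarrow> L i h = 0 \<Longrightarrow> L i d = 0"
  shows "d = (\<lambda>_. 0)"
proof -
  have "\<forall>\<^sub>F s in nhds 0. 0 \<le> L i h + s * L i d" if "i \<in> I" for i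
  proof (cases "L i h = 0")
    case True
    then show ?thesis
      using tight[OF that] by simp
  next
    case False
    have "((\<lambda>s. L i h + s * L i d) \<longlongrightarrow> L i h + 0 * L i d) (nhds 0)"
      by (intro tendsto_intros tendsto_ident_at) (simp add: tendsto_nhds_iff)
    moreover have "0 < L i h"
      using False nonneg[OF that] by simp
    ultimately have "\<forall>\<^sub>F s in nhds 0. 0 < L i h + s * L i d"
      by (simp add: order_tendstoD(1))
    then show ?thesis
      by (rule eventually_mono) simp
  qed
  then have "\<forall>\<^sub>F s in nhds 0. \<forall>i\<in>I. 0 \<le> L i h + s * L i d"
    using \<open>finite I\<close> by (intro eventually_ball_finite) auto
  then obtain \<epsilon> :: real where "\<epsilon> > 0" and \<epsilon>: "\<And>s. dist s 0 < \<epsilon> \<Longrightarrow> \<forall>i\<in>I. 0 \<le> L i h + s * L i d"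
    unfolding eventually_nhds_metric by blast
  have in_P: "(\<lambda>v. h v + t * d v) \<in> P" if "\<bar>t\<bar> < \<epsilon>" for t
    using \<epsilon>[of t] that by (intro feasible) (simp add: linear)
  define s where "s = \<epsilon> / 2"
  have "(\<lambda>v. h v + s * d v) \<in> P" "(\<lambda>v. h v + (- s) * d v) \<in> P"
    using \<open>\<epsilon> > 0\<close> by (intro in_P; simp add: s_def)+
  moreover have "h = (\<lambda>v. (1/2) * (h v + s * d v) + (1 - 1/2) * (h v + (- s) * d v))"
    by (simp add: algebra_simps)
  ultimately have "(\<lambda>v. h v + s * d v) = (\<lambda>v. h v + (- s) * d v)"
    using extreme unfolding extreme_pt_def by (elim conjE ballE allE[of _ "1/2"]) auto
  then show ?thesis
    using \<open>\<epsilon> > 0\<close> by (auto simp: fun_eq_iff s_def)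
qed

lemma homogeneous_system_eliminate:
  fixes c :: "'j \<Rightarrow> 'e \<Rightarrow> 'a::field"
  assumes "finite X" "e0 \<in> X" "c j e0 \<noteq> 0"
    and reduced: "\<forall>j'\<in>J. (\<Sum>e\<in>X - {e0}. (c j' e - c j' e0 / c j e0 * c j e) * y e) = 0"
  defines "x \<equiv> y(e0 := - (\<Sum>e\<in>X - {e0}. c j e * y e) / c j e0)"
  shows "\<forall>j'\<in>insert j J. (\<Sum>e\<in>X. c j' e * x e) = 0"
proof
  have sum_x: "(\<Sum>e\<in>X. f e * x e) = f e0 * x e0 + (\<Sum>e\<in>X - {e0}. f e * y e)" for f
  proof -
    have "(\<Sum>e\<in>X - {e0}. f e * x e) = (\<Sum>e\<in>X - {e0}. f e * y e)"
      by (rule sum.cong) (auto simp: x_def)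
    then show ?thesis
      using assms(1,2) by (simp add: sum.remove)
  qed
  fix j' assume "j' \<in> insert j J"
  then consider "j' = j" | "j' \<in> J"
    by blast
  then show "(\<Sum>e\<in>X. c j' e * x e) = 0"
  proof cases
    case 1
    then show ?thesis
      unfolding sum_x using assms(3) by (simp add: x_def)
  next
    case 2
    then have "0 = (\<Sum>e\<in>X - {e0}. (c j' e - c j' e0 / c j e0 * c j e) * y e)"
      using reduced by simp
    also have "\<dots> = (\<Sum>e\<in>X - {e0}. c j' e * y e) + c j' e0 * x e0"
      by (simp add: x_def algebra_simps sum_subtractf sum_distrib_left sum_divide_distrib)
    finally show ?thesis
      unfolding sum_x by (simp add: algebra_simps)
  qed
qed

lemma homogeneous_system_nontrivial_solution:
  fixes c :: "'j \<Rightarrow> 'e \<Rightarrow> 'a::field"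
  assumes "finite J" "finite X" "card J < card X"
  shows "\<exists>x. (\<exists>e\<in>X. x e \<noteq> 0) \<and> (\<forall>e. e \<notin> X \<longrightarrow> x e = 0) \<and>
    (\<forall>j\<in>J. (\<Sum>e\<in>X. c j e * x e) = 0)"
  using assms
proof (induction J arbitrary: X c rule: finite_induct)
  case empty
  then obtain e0 where "e0 \<in> X"
    by fastforce
  then show ?case
    by (intro exI[of _ "\<lambda>e. of_bool (e = e0)"]) auto
next
  case (insert j J)
  show ?case
  proof (cases "\<forall>e\<in>X. c j e = 0")
    case True
    then show ?thesis
      using insert.IH[of X c] insert.prems insert.hyps by auto
  next
    case False
    then obtain e0 where e0: "e0 \<in> X" "c j e0 \<noteq> 0"
      by blast
    then have "card J < card (X - {e0})"
      using insert by simp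
    then obtain y where y: "\<exists>e\<in>X - {e0}. y e \<noteq> 0" "\<forall>e. e \<notin> X - {e0} \<longrightarrow> y e = 0"
      "\<forall>j'\<in>J. (\<Sum>e\<in>X - {e0}. (c j' e - c j' e0 / c j e0 * c j e) * y e) = 0"
      using insert.IH[of "X - {e0}" "\<lambda>j' e. c j' e - c j' e0 / c j e0 * c j e"] insert.prems
      by auto
    let ?x = "y(e0 := - (\<Sum>e\<in>X - {e0}. c j e * y e) / c j e0)"
    have "\<exists>e\<in>X. ?x e \<noteq> 0" "\<forall>e. e \<notin> X \<longrightarrow> ?x e = 0"
      using y e0 by auto
    moreover have "\<forall>j'\<in>insert j J. (\<Sum>e\<in>X. c j' e * ?x e) = 0"
      using insert.prems(1) e0 y(3) by (rule homogeneous_system_eliminate)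
    ultimately show ?thesis
      by blast
  qed
qed

section \<open>Vertices of hive polytopes with small flatspaces\<close>

locale hive_vertex =
  fixes n :: nat and h :: "nat \<times> nat \<Rightarrow> real"
  assumes extreme: "extreme_pt h (hive_polytope n h)"
    and small_flatspaces: "\<forall>F \<in> flatspaces n h. card F = 1 \<or> card F = 2"
begin

definition flat_rhombus :: "edge \<Rightarrow> bool" where
  "flat_rhombus e \<longleftrightarrow> inner_edge n e \<and> rhombus_slack (edge_diff h) e = 0"

lemma flat_rhombus_inner: "flat_rhombus e \<Longrightarrow> inner_edge n e"
  by (simp add: flat_rhombus_def)

lemma flat_preserving_perturbation_eq_0:
  assumes zero: "\<And>v. v \<notin> hive_vertices n \<or> v \<in> border n \<Longrightarrow> d v = 0"
    and flat: "\<And>e. flat_rhombus e \<Longrightarrow> rhombus_slack (edge_diff d) e = 0"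
  shows "d = (\<lambda>_. 0)"
proof (rule extreme_pt_tight_direction_eq_0[OF extreme finite_inner_edges,
      where L = "\<lambda>e g. rhombus_slack (edge_diff g) e"])
  have h: "is_hive n h" "\<And>v. v \<notin> hive_vertices n \<Longrightarrow> h v = 0"
    using extreme unfolding extreme_pt_def hive_polytope_def by auto
  then show "0 \<le> rhombus_slack (edge_diff h) e" if "e \<in> {e. inner_edge n e}" for e
    using that by (simp add: is_hive_iff_rhombus_slack)
  fix s
  assume "\<forall>e\<in>{e. inner_edge n e}. 0 \<le> rhombus_slack (edge_diff (\<lambda>v. h v + s * d v)) e"
  then show "(\<lambda>v. h v + s * d v) \<in> hive_polytope n h"
    using h zero by (auto simp: hive_polytope_def is_hive_iff_rhombus_slack)
qed (auto simp: rhombus_slack_edge_diff_add flat flat_rhombus_def)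

lemma closed_labelling_vanishes:
  assumes closed: "\<And>T. T \<in> small_triangles n \<Longrightarrow> circulation x T = 0"
    and border_zero: "\<And>e. \<not> inner_edge n e \<Longrightarrow> x e = 0"
    and flat: "\<And>e. flat_rhombus e \<Longrightarrow> rhombus_slack x e = 0"
    and "grid_edge n e"
  shows "x e = 0"
proof -
  let ?d = "edge_primitive n x"
  have diff: "edge_diff ?d e' = x e'" if "grid_edge n e'" for e'
    using closed border_zero that by (rule edge_diff_edge_primitive)
  have "?d = (\<lambda>_. 0)"
  proof (rule flat_preserving_perturbation_eq_0)
    show "?d v = 0" if "v \<notin> hive_vertices n \<or> v \<in> border n" for v
      using closed border_zero that by (rule edge_primitive_eq_0)
    show "rhombus_slack (edge_diff ?d) e' = 0" if "flat_rhombus e'" for e'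
      using that flat diff rhombus_slack_cong[of n e' "edge_diff ?d" x]
      by (simp add: flat_rhombus_def)
  qed
  then show ?thesis
    using diff[OF \<open>grid_edge n e\<close>] by (cases e) simp_all
qed

lemma flat_equiv_at_most_two:
  assumes "T \<in> small_triangles n" "U \<in> small_triangles n" "V \<in> small_triangles n"
    and "flat_equiv n h T U" "flat_equiv n h T V"
  shows "T = U \<or> T = V \<or> U = V"
proof (rule ccontr)
  define F where "F = {W \<in> small_triangles n. flat_equiv n h T W}"
  assume "\<not> (T = U \<or> T = V \<or> U = V)"
  then have "card {T, U, V} = 3"
    by simp
  moreover have "{T, U, V} \<subseteq> F"
    using assms by (auto simp: F_def flat_equiv_def)
  moreover have "finite F"
    using finite_small_triangles by (simp add: F_def)
  ultimately have "3 \<le> card F"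
    by (metis card_mono)
  moreover have "F \<in> flatspaces n h"
    using assms(1) unfolding F_def flatspaces_def by blast
  ultimately show False
    using small_flatspaces by fastforce
qed

lemma flat_rhombus_triangles_unique:
  assumes "flat_rhombus e" "flat_rhombus e'"
    and "up_triangle e = up_triangle e' \<or> down_triangle e = down_triangle e'"
  shows "e = e'"
proof -
  have inner: "inner_edge n e" "inner_edge n e'"
    using assms by (simp_all add: flat_rhombus_def)
  have "flat_adj n h (down_triangle e) (up_triangle e)" "flat_adj n h (down_triangle e') (up_triangle e')"
    using assms(1,2) by (auto simp: flat_rhombus_def intro: flat_adj_if_rhombus_slack_eq_0)
  then have "flat_equiv n h (down_triangle e) (up_triangle e)" "flat_equiv n h (up_triangle e) (down_triangle e)"
    "flat_equiv n h (down_triangle e') (up_triangle e')" "flat_equiv n h (up_triangle e') (down_triangle e')"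
    unfolding flat_equiv_def by auto
  then have "up_triangle e = up_triangle e' \<and> down_triangle e = down_triangle e'"
    using assms(3) rhombus_triangles_mem[OF inner(1)] rhombus_triangles_mem[OF inner(2)]
      flat_equiv_at_most_two by (metis up_triangle_neq_down_triangle)
  then show ?thesis
    using inner by (blast intro: up_down_triangle_inj)
qed

lemma rhombus_side_not_flat:
  assumes "flat_rhombus e" "s \<in> triangle_edges (up_triangle e) \<union> triangle_edges (down_triangle e)" "s \<noteq> e"
  shows "\<not> flat_rhombus s"
proof
  assume "flat_rhombus s"
  then have "up_triangle e = up_triangle s \<or> down_triangle e = down_triangle s"
    using assms(2) triangle_of_inner_edge[OF flat_rhombus_inner]
    by (metis Un_iff up_triangle_neq_down_triangle)
  then show False
    using flat_rhombus_triangles_unique assms \<open>flat_rhombus s\<close> by blast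
qed

definition nonintegral :: "edge \<Rightarrow> bool" where
  "nonintegral e \<longleftrightarrow> grid_edge n e \<and> edge_diff h e \<notin> int_span (border n) h"

text \<open>The short diagonals of these rhombi are added to the support of the perturbation, and their
  flatness is imposed as an extra equation.\<close>

definition nonintegral_flat_rhombi :: "edge set" where
  "nonintegral_flat_rhombi = {e. flat_rhombus e \<and> (\<forall>(a, b)\<in>rhombus_pairs e. nonintegral a)}"

definition perturbed_edges :: "edge set" where
  "perturbed_edges = {e. nonintegral e} \<union> nonintegral_flat_rhombi"

definition perturbed_triangles :: "tri set" where
  "perturbed_triangles = {T \<in> small_triangles n. triangle_edges T \<inter> perturbed_edges \<noteq> {}}"

lemma nonintegral_inner: "nonintegral e \<Longrightarrow> inner_edge n e"
  using edge_diff_in_int_span_if_border by (auto simp: nonintegral_def)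

lemma perturbed_edge_inner: "e \<in> perturbed_edges \<Longrightarrow> inner_edge n e"
  by (auto simp: perturbed_edges_def nonintegral_flat_rhombi_def flat_rhombus_def nonintegral_inner)

lemma finite_perturbed_edges: "finite perturbed_edges"
  using finite_inner_edges by (rule finite_subset[rotated]) (auto intro: perturbed_edge_inner)

lemma second_nonintegral_triangle_edge:
  assumes "T \<in> small_triangles n" "e \<in> triangle_edges T" "nonintegral e"
  obtains e' where "e' \<in> triangle_edges T" "e' \<noteq> e" "nonintegral e'"
proof -
  have "\<exists>e'\<in>triangle_edges T - {e}. nonintegral e'"
  proof (rule ccontr)
    assume "\<not> ?thesis"
    then have integral: "edge_diff h e' \<in> int_span (border n) h" if "e' \<in> triangle_edges T - {e}" for e'
      using that assms(1) grid_edge_if_in_triangle by (auto simp: nonintegral_def)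
    have "edge_sign e * edge_diff h e = - (\<Sum>e'\<in>triangle_edges T - {e}. edge_sign e' * edge_diff h e')"
      using circulation_edge_diff[of h T] assms(2)
      by (simp add: circulation_def sum.remove eq_neg_iff_add_eq_0 del: circulation_Up circulation_Down)
    also have "\<dots> \<in> int_span (border n) h"
      using integral by (intro int_span_uminus int_span_sum int_span_edge_sign_mult)
    finally have "edge_sign e * (edge_sign e * edge_diff h e) \<in> int_span (border n) h"
      by (rule int_span_edge_sign_mult)
    then show False
      using assms(3) by (cases e) (simp_all add: nonintegral_def)
  qed
  then show ?thesis
    using that by blast
qed

lemma flat_rhombus_pair_nonintegral_iff:
  assumes "flat_rhombus e" "(a, b) \<in> rhombus_pairs e"
  shows "nonintegral a \<longleftrightarrow> nonintegral b"
proof -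
  have "edge_diff h a = edge_diff h b"
    using assms rhombus_slack_eq_pair[OF circulation_edge_diff circulation_edge_diff]
    by (force simp: flat_rhombus_def)
  moreover have "grid_edge n a" "grid_edge n b"
    using rhombus_pair_sides[OF flat_rhombus_inner[OF assms(1)] assms(2)]
      rhombus_triangles_mem[OF flat_rhombus_inner[OF assms(1)]] grid_edge_if_in_triangle
    by blast+
  ultimately show ?thesis
    by (simp add: nonintegral_def)
qed

definition nonintegral_rhombus_triangles :: "tri set" where
  "nonintegral_rhombus_triangles =
     up_triangle ` nonintegral_flat_rhombi \<union> down_triangle ` nonintegral_flat_rhombi"

lemma nonintegral_rhombus_triangle_edges:
  assumes "T \<in> nonintegral_rhombus_triangles"
  shows "triangle_edges T \<subseteq> perturbed_edges"
proof
  obtain e where R: "e \<in> nonintegral_flat_rhombi" and T: "T = up_triangle e \<or> T = down_triangle e"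
    using assms by (auto simp: nonintegral_rhombus_triangles_def)
  then have flat: "flat_rhombus e" and sides: "\<forall>(a, b)\<in>rhombus_pairs e. nonintegral a"
    by (auto simp: nonintegral_flat_rhombi_def)
  fix e' assume "e' \<in> triangle_edges T"
  then have "e' = e \<or> (\<exists>(a, b)\<in>rhombus_pairs e. e' = a \<or> e' = b)"
    using rhombus_triangle_edges[OF flat_rhombus_inner[OF flat]] T by blast
  then show "e' \<in> perturbed_edges"
    using R sides flat_rhombus_pair_nonintegral_iff[OF flat] by (auto simp: perturbed_edges_def)
qed

lemma perturbed_edge_nonintegral:
  assumes "T \<notin> nonintegral_rhombus_triangles"
    and "e \<in> triangle_edges T" "e \<in> perturbed_edges"
  shows "nonintegral e"
proof (rule ccontr)
  assume "\<not> nonintegral e"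
  then have "e \<in> nonintegral_flat_rhombi"
    using assms(3) by (simp add: perturbed_edges_def)
  moreover have "T = up_triangle e \<or> T = down_triangle e"
    using assms(2,3) perturbed_edge_inner triangle_of_inner_edge by blast
  ultimately show False
    using assms(1) by (auto simp: nonintegral_rhombus_triangles_def)
qed

lemma card_triangle_perturbed_edges:
  assumes "T \<in> small_triangles n"
  shows "2 * of_bool (T \<in> perturbed_triangles)
    + of_bool (T \<in> nonintegral_rhombus_triangles)
    \<le> card (triangle_edges T \<inter> perturbed_edges)"
proof (cases "T \<in> nonintegral_rhombus_triangles")
  case True
  then have "triangle_edges T \<inter> perturbed_edges = triangle_edges T"
    using nonintegral_rhombus_triangle_edges by blast
  then show ?thesis
    by (simp add: card_triangle_edges)
next
  case not_rhombus: False
  show ?thesis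
  proof (cases "T \<in> perturbed_triangles")
    case True
    then obtain e where e: "e \<in> triangle_edges T" "e \<in> perturbed_edges"
      by (auto simp: perturbed_triangles_def)
    then obtain e' where e': "e' \<in> triangle_edges T" "e' \<noteq> e" "nonintegral e'"
      using second_nonintegral_triangle_edge[OF assms] perturbed_edge_nonintegral[OF not_rhombus] by metis
    have "card {e, e'} \<le> card (triangle_edges T \<inter> perturbed_edges)"
      using e e' by (intro card_mono) (auto simp: perturbed_edges_def)
    then show ?thesis
      using True not_rhombus e'(2) by simp
  next
    case False
    then show ?thesis
      using not_rhombus by simp
  qed
qed

lemma two_card_perturbed_triangles_le:
  assumes "A \<subseteq> small_triangles n" "finite A"
    and "(\<Sum>T\<in>A. card (triangle_edges T \<inter> perturbed_edges)) = card perturbed_edges"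
    and "card (A \<inter> nonintegral_rhombus_triangles) = card nonintegral_flat_rhombi"
  shows "2 * card (A \<inter> perturbed_triangles) + card nonintegral_flat_rhombi \<le> card perturbed_edges"
proof -
  have "2 * card (A \<inter> perturbed_triangles) + card nonintegral_flat_rhombi
      = (\<Sum>T\<in>A. 2 * of_bool (T \<in> perturbed_triangles) + of_bool (T \<in> nonintegral_rhombus_triangles))"
    using assms(2,4) by (simp add: sum.distrib sum_distrib_left[symmetric] Int_def)
  also have "\<dots> \<le> (\<Sum>T\<in>A. card (triangle_edges T \<inter> perturbed_edges))"
    using assms(1) by (intro sum_mono card_triangle_perturbed_edges) blast
  finally show ?thesis
    using assms(3) by simp
qed

lemma card_perturbed_triangles_le:
  "card perturbed_triangles + card nonintegral_flat_rhombi \<le> card perturbed_edges"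
proof -
  let ?X = perturbed_edges and ?R = nonintegral_flat_rhombi
  have R_inner: "?R \<subseteq> {e. inner_edge n e}" and X_inner: "?X \<subseteq> {e. inner_edge n e}"
    using perturbed_edge_inner by (auto simp: nonintegral_flat_rhombi_def flat_rhombus_def)
  have "inj_on up_triangle ?R" "inj_on down_triangle ?R"
    using flat_rhombus_triangles_unique by (auto simp: inj_on_def nonintegral_flat_rhombi_def)
  then have card_R: "card (up_triangle ` ?R) = card ?R" "card (down_triangle ` ?R) = card ?R"
    by (simp_all add: card_image)
  have "up_triangle ` ?R \<subseteq> up_triangles n" "down_triangle ` ?R \<subseteq> down_triangles n"
    using R_inner by (auto intro: up_triangle_mem down_triangle_mem inner_edge_imp_grid_edge)
  then have "up_triangles n \<inter> nonintegral_rhombus_triangles = up_triangle ` ?R"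
    "down_triangles n \<inter> nonintegral_rhombus_triangles = down_triangle ` ?R"
    unfolding nonintegral_rhombus_triangles_def using up_triangles_disjoint_down_triangles[of n] by blast+
  moreover have "(\<Sum>T\<in>up_triangles n. card (triangle_edges T \<inter> ?X)) = card ?X"
    using sum_up_triangles_incidence[OF finite_perturbed_edges, of n "\<lambda>_. 1 :: nat"]
      X_inner inner_edge_imp_grid_edge by auto
  moreover have "(\<Sum>T\<in>down_triangles n. card (triangle_edges T \<inter> ?X)) = card ?X"
    using sum_down_triangles_incidence[OF finite_perturbed_edges X_inner, of "\<lambda>_. 1 :: nat"] by simp
  ultimately have "2 * card (up_triangles n \<inter> perturbed_triangles) + card ?R \<le> card ?X"
    "2 * card (down_triangles n \<inter> perturbed_triangles) + card ?R \<le> card ?X"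
    using card_R by (auto intro!: two_card_perturbed_triangles_le
        simp: small_triangles_eq finite_up_triangles finite_down_triangles)
  moreover have "card perturbed_triangles = card (up_triangles n \<inter> perturbed_triangles)
      + card (down_triangles n \<inter> perturbed_triangles)"
    using up_triangles_disjoint_down_triangles finite_up_triangles finite_down_triangles
    by (subst card_Un_disjoint[symmetric]) (auto simp: perturbed_triangles_def small_triangles_eq
        intro: arg_cong[where f = card])
  ultimately show ?thesis
    by linarith
qed

text \<open>The circulation equation of \<open>T0\<close> is omitted to make the system strictly underdetermined;
  it is recovered from \<open>circulation_eq_0_if_all_others\<close>.\<close>

lemma underdetermined_perturbation:
  assumes "T0 \<in> perturbed_triangles"
  obtains x where "\<exists>e\<in>perturbed_edges. x e \<noteq> 0" and "\<And>e. e \<notin> perturbed_edges \<Longrightarrow> x e = 0"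
    and "\<And>T. T \<in> perturbed_triangles \<Longrightarrow> T \<noteq> T0 \<Longrightarrow> circulation x T = 0"
    and "\<And>r. r \<in> nonintegral_flat_rhombi \<Longrightarrow> rhombus_slack x r = 0"
proof -
  let ?X = perturbed_edges and ?R = nonintegral_flat_rhombi and ?Tv = perturbed_triangles
  define J :: "(tri + edge) set" where "J = Inl ` (?Tv - {T0}) \<union> Inr ` ?R"
  define c where "c j e = (case j of
      Inl T \<Rightarrow> circulation (\<lambda>u. of_bool (u = e)) T
    | Inr r \<Rightarrow> rhombus_slack (\<lambda>u. of_bool (u = e)) r)" for j e
  have finite_Tv: "finite ?Tv" and finite_R: "finite ?R"
    using finite_small_triangles finite_perturbed_edges
    by (auto simp: perturbed_triangles_def perturbed_edges_def intro: finite_subset[rotated])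
  then have finite_J: "finite J"
    by (simp add: J_def)
  have "card J = card (?Tv - {T0}) + card ?R"
    using finite_Tv finite_R unfolding J_def by (subst card_Un_disjoint) (auto simp: card_image)
  moreover have "card (?Tv - {T0}) < card ?Tv"
    using finite_Tv assms by (rule card_Diff1_less)
  ultimately have card_J: "card J < card ?X"
    using card_perturbed_triangles_le by linarith
  obtain x where nonzero: "\<exists>e\<in>?X. x e \<noteq> 0" and supp: "\<forall>e. e \<notin> ?X \<longrightarrow> x e = 0"
    and solves: "\<forall>j\<in>J. (\<Sum>e\<in>?X. c j e * x e) = 0"
    using homogeneous_system_nontrivial_solution[OF finite_J finite_perturbed_edges card_J, of c]
    by blast
  have "circulation x T = 0" if "T \<in> ?Tv" "T \<noteq> T0" for T
  proof -
    have "(\<Sum>e\<in>?X. c (Inl T) e * x e) = 0"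
      using that solves by (simp add: J_def)
    then show ?thesis
      using circulation_as_sum[OF finite_perturbed_edges, of x] supp by (simp add: c_def)
  qed
  moreover have "rhombus_slack x r = 0" if "r \<in> ?R" for r
  proof -
    have "(\<Sum>e\<in>?X. c (Inr r) e * x e) = 0"
      using that solves by (simp add: J_def)
    then show ?thesis
      using rhombus_slack_as_sum[OF finite_perturbed_edges, of x] supp by (simp add: c_def)
  qed
  ultimately show ?thesis
    using supp by (intro that[OF nonzero]) blast+
qed

lemma nonintegral_perturbation:
  assumes "nonintegral e0"
  obtains x where "\<exists>e\<in>perturbed_edges. x e \<noteq> 0" and "\<And>e. e \<notin> perturbed_edges \<Longrightarrow> x e = 0"
    and "\<And>T. T \<in> small_triangles n \<Longrightarrow> circulation x T = 0"
    and "\<And>r. r \<in> nonintegral_flat_rhombi \<Longrightarrow> rhombus_slack x r = 0"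
proof -
  define T0 where "T0 = up_triangle e0"
  have "e0 \<in> perturbed_edges" "inner_edge n e0"
    using assms nonintegral_inner by (auto simp: perturbed_edges_def)
  then have T0: "T0 \<in> perturbed_triangles" "T0 \<in> up_triangles n"
    unfolding T0_def perturbed_triangles_def small_triangles_eq
    using edge_in_up_triangle up_triangle_mem inner_edge_imp_grid_edge by blast+
  from T0(1) show ?thesis
  proof (rule underdetermined_perturbation)
    fix x :: "edge \<Rightarrow> real"
    assume nonzero: "\<exists>e\<in>perturbed_edges. x e \<noteq> 0"
      and supp: "\<And>e. e \<notin> perturbed_edges \<Longrightarrow> x e = 0"
      and closed_Tv: "\<And>T. T \<in> perturbed_triangles \<Longrightarrow> T \<noteq> T0 \<Longrightarrow> circulation x T = 0"
      and stiff: "\<And>r. r \<in> nonintegral_flat_rhombi \<Longrightarrow> rhombus_slack x r = 0"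
    have others: "circulation x T = 0" if "T \<in> small_triangles n" "T \<noteq> T0" for T
    proof (cases "T \<in> perturbed_triangles")
      case True
      then show ?thesis
        using that closed_Tv by blast
    next
      case False
      then show ?thesis
        using that supp by (simp add: circulation_eq_restrict[of perturbed_edges] perturbed_triangles_def)
    qed
    moreover have "circulation x T0 = 0"
      using supp perturbed_edge_inner by (intro circulation_eq_0_if_all_others[OF _ T0(2) others]) blast
    ultimately have closed: "circulation x T = 0" if "T \<in> small_triangles n" for T
      using that by blast
    show ?thesis
      using nonzero supp closed stiff by (rule that)
  qed
qed

lemma perturbation_keeps_flat_rhombi:
  assumes supp: "\<And>e. e \<notin> perturbed_edges \<Longrightarrow> x e = 0"
    and closed: "\<And>T. T \<in> small_triangles n \<Longrightarrow> circulation x T = 0"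
    and stiff: "\<And>r. r \<in> nonintegral_flat_rhombi \<Longrightarrow> rhombus_slack x r = 0"
    and flat: "flat_rhombus e"
  shows "rhombus_slack x e = 0"
proof (cases "e \<in> nonintegral_flat_rhombi")
  case True
  then show ?thesis
    by (rule stiff)
next
  case False
  then obtain a b where ab: "(a, b) \<in> rhombus_pairs e" "\<not> nonintegral a"
    using flat by (auto simp: nonintegral_flat_rhombi_def)
  then have "\<not> nonintegral b"
    using flat_rhombus_pair_nonintegral_iff[OF flat] by blast
  moreover have "\<not> flat_rhombus a" "\<not> flat_rhombus b"
    using rhombus_side_not_flat[OF flat] rhombus_pair_sides[OF flat_rhombus_inner[OF flat] ab(1)]
    by blast+
  ultimately have "x a = 0" "x b = 0"
    using ab(2) supp by (auto simp: perturbed_edges_def nonintegral_flat_rhombi_def)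
  moreover note rhombus_triangles_mem[OF flat_rhombus_inner[OF flat]]
  ultimately show ?thesis
    using rhombus_slack_eq_pair[OF closed closed ab(1)] by simp
qed

lemma no_nonintegral_edge: "\<not> nonintegral e0"
proof
  assume "nonintegral e0"
  then show False
  proof (rule nonintegral_perturbation)
    fix x :: "edge \<Rightarrow> real"
    assume nonzero: "\<exists>e\<in>perturbed_edges. x e \<noteq> 0"
      and supp: "\<And>e. e \<notin> perturbed_edges \<Longrightarrow> x e = 0"
      and closed: "\<And>T. T \<in> small_triangles n \<Longrightarrow> circulation x T = 0"
      and stiff: "\<And>r. r \<in> nonintegral_flat_rhombi \<Longrightarrow> rhombus_slack x r = 0"
    have border_zero: "x e = 0" if "\<not> inner_edge n e" for e
      using supp perturbed_edge_inner that by blast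
    have "x e = 0" if "e \<in> perturbed_edges" for e
      using that perturbed_edge_inner inner_edge_imp_grid_edge
      by (blast intro: closed_labelling_vanishes[OF closed border_zero]
          perturbation_keeps_flat_rhombi[OF supp closed stiff])
    with nonzero show False
      by blast
  qed
qed

lemma label_in_int_span: "p + q \<le> n \<Longrightarrow> h (p, q) \<in> int_span (border n) h"
proof (induction p)
  case 0
  then show ?case
    by (intro int_span_generator finite_border) (simp add: border_def)
next
  case (Suc p)
  then have "h (p, q) + edge_diff h (Horiz p q) \<in> int_span (border n) h"
    using no_nonintegral_edge[of "Horiz p q"] by (intro int_span_add) (simp_all add: nonintegral_def)
  then show ?case
    by simp
qed

end

theorem proposition3p2:
  fixes n :: nat and h :: "nat \<times> nat \<Rightarrow> real"
  assumes "n \<ge> 1"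
    and "extreme_pt h (hive_polytope n h)"
    and "\<forall>F \<in> flatspaces n h. card F = 1 \<or> card F = 2"
  shows "\<forall>v \<in> hive_vertices n. \<exists>c :: nat \<times> nat \<Rightarrow> int.
           h v = (\<Sum>b \<in> border n. of_int (c b) * h b)"
proof
  interpret hive_vertex n h
    using assms(2,3) by unfold_locales
  fix v assume "v \<in> hive_vertices n"
  then obtain p q where "v = (p, q)" "p + q \<le> n"
    by (auto simp: hive_vertices_def)
  then have "h v \<in> int_span (border n) h"
    by (simp add: label_in_int_span)
  then show "\<exists>c :: nat \<times> nat \<Rightarrow> int. h v = (\<Sum>b \<in> border n. of_int (c b) * h b)"
    by (simp add: int_span_def)
qed

end
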